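(* Let $m>6C^2(C+1)$ and $l_m=\lfloor\frac{m-2}{C+1}\rfloor$. Let $F_m(\mathbf x)=\sum_{i=1}^n a_iP_m(x_i)$ be a node of the escalator tree of $m$-gonal forms with $n\ge (C-2)l_m+5$ and $a_1=a_2=\cdots=a_{(C-2)l_m+5}=1$. If $a_1+a_2+\cdots+a_n\ge m-4$, then $F_m(\mathbf x)$ is universal (hence a leaf).
   Context: For an integer $m\ge 3$ and $x\in\mathbb Z$ put $P_m(x)=\frac{m-2}{2}x^2-\frac{m-4}{2}x$. An $m$-gonal form of rank $n$ is $a_1P_m(x_1)+\cdots+a_nP_m(x_n)$ with positive integers $a_1\le\cdots\le a_n$ and $x_i\in\mathbb Z$; it represents $N$ if $N$ is a value at some integer vector, and is universal if it represents every positive integer. The truant of a non-universal form is the smallest positive integer it does not represent (the empty form has truant $1$). The escalator tree of $m$-gonal forms is the rooted tree whose root is the empty form; a universal node is a leaf, and a non-universal node $\sum_{i=1}^k a_iP_m(x_i)$ has as children exactly all forms $\sum_{i=1}^{k+1}a_iP_m(x_i)$ with $a_{k+1}\ge a_k$ (any $a_1\ge1$ if $k=0$) that represent the truant of the node. Standing assumption: $C$ is a fixed absolute constant such that for every $m\ge3$, every $m$-gonal form that represents every positive integer in $[1,C(m-2)]$ is universal. *)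

theory Defs
  imports Main
begin

text \<open>The m-gonal number P_m(x) = ((m-2)x^2 - (m-4)x)/2 (always an integer).\<close>
definition pgon :: "nat \<Rightarrow> int \<Rightarrow> int" where
  "pgon m x = ((int m - 2) * x^2 - (int m - 4) * x) div 2"

definition mgonal_form :: "nat list \<Rightarrow> bool" where
  "mgonal_form as \<longleftrightarrow> sorted as \<and> (\<forall>a\<in>set as. 0 < a)"

definition represents :: "nat \<Rightarrow> nat list \<Rightarrow> int \<Rightarrow> bool" where
  "represents m as N \<longleftrightarrow>
     (\<exists>x :: nat \<Rightarrow> int. N = (\<Sum>i<length as. int (as ! i) * pgon m (x i)))"

definition universal :: "nat \<Rightarrow> nat list \<Rightarrow> bool" where
  "universal m as \<longleftrightarrow> (\<forall>N::int. N > 0 \<longrightarrow> represents m as N)"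

definition truant :: "nat \<Rightarrow> nat list \<Rightarrow> int" where
  "truant m as = (LEAST N::int. N > 0 \<and> \<not> represents m as N)"

inductive escalator_node :: "nat \<Rightarrow> nat list \<Rightarrow> bool" for m :: nat where
  root: "escalator_node m []"
| child: "\<lbrakk> escalator_node m as; \<not> universal m as; 1 \<le> a;
            as \<noteq> [] \<longrightarrow> last as \<le> a;
            represents m (as @ [a]) (truant m as) \<rbrakk>
          \<Longrightarrow> escalator_node m (as @ [a])"

definition escalator_const :: "nat \<Rightarrow> bool" where
  "escalator_const C \<longleftrightarrow>
     (\<forall>m\<ge>3. \<forall>as. mgonal_form as \<longrightarrow>
        (\<forall>N::int. 1 \<le> N \<and> N \<le> int C * (int m - 2) \<longrightarrow> represents m as N) \<longrightarrow>
        universal m as)"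

end

theory Submission
  imports Defs
begin

text \<open>For m \<ge> 4 every value P_m(x) is 0, 1 or at least m - 3. So below m - 3 a form represents
  nothing beyond the sum of its coefficients, and along the escalator tree each new coefficient
  exceeds the sum of the previous ones by at most one while that sum stays below m - 4. Hence the
  subset sums of the coefficients after the first C + 2 ones come within C + 2 of every number up
  to m - 4, while those ones, evaluated at 2, -1 and 1 (values m, m - 3 and 1), produce
  s(m - 2) + e for every s \<le> C and every small e. Together they represent every N \<le> C(m - 2),
  and the standing assumption on C gives universality; that assumption also forces C \<ge> 2,
  since [] and [1] are not universal for m = 3.\<close>

lemma pgon_0 [simp]: "pgon m 0 = 0"
  by (simp add: pgon_def)

lemma pgon_1 [simp]: "pgon m 1 = 1"
  by (simp add: pgon_def)

lemma pgon_minus_1: "pgon m (-1) = int m - 3"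
  by (simp add: pgon_def)

lemma pgon_2: "pgon m 2 = int m"
proof -
  have "(int m - 2) * 2^2 - (int m - 4) * 2 = 2 * int m"
    by (simp add: algebra_simps)
  then show ?thesis
    by (simp add: pgon_def)
qed

lemma pgon_cases:
  assumes "4 \<le> m"
  shows "pgon m x = 0 \<or> pgon m x = 1 \<or> int m - 3 \<le> pgon m x"
proof -
  define q where "q = (int m - 2) * x^2 - (int m - 4) * x"
  have pq: "pgon m x = q div 2"
    by (simp add: pgon_def q_def)
  consider "x \<ge> 2" | "x \<le> -1" | "x = 0" | "x = 1"
    by linarith
  then show ?thesis
  proof cases
    case 1
    have "(x - 2) * ((int m - 2) * x + int m) \<ge> 0"
      using 1 assms by (intro mult_nonneg_nonneg) auto
    moreover have "(x - 2) * ((int m - 2) * x + int m) = q - 2 * int m"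
      by (simp add: q_def power2_eq_square algebra_simps)
    ultimately show ?thesis
      using pq by linarith
  next
    case 2
    have "(int m - 2) * x \<le> 0"
      using 2 assms by (intro mult_nonneg_nonpos) auto
    then have "(x + 1) * ((int m - 2) * x - 2 * (int m - 3)) \<ge> 0"
      using 2 assms by (intro mult_nonpos_nonpos) auto
    moreover have "(x + 1) * ((int m - 2) * x - 2 * (int m - 3)) = q - 2 * (int m - 3)"
      by (simp add: q_def power2_eq_square algebra_simps)
    ultimately have "2 * (int m - 3) \<le> q"
      by linarith
    then show ?thesis
      using pq zdiv_mono1[of "2 * (int m - 3)" q 2] by simp
  qed auto
qed

lemma pgon_nonneg: "4 \<le> m \<Longrightarrow> 0 \<le> pgon m x"
  using pgon_cases[of m x] by auto

lemma pgon_3_ne_2: "pgon 3 y \<noteq> 2"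
proof -
  have "pgon 3 y = (y * (y + 1)) div 2"
    by (simp add: pgon_def power2_eq_square algebra_simps)
  moreover have "y * (y + 1) \<ge> 6" if "y \<ge> 2 \<or> y \<le> -3"
    using that mult_mono[of 2 y 3 "y + 1"] mult_mono[of 3 "-y" 2 "-y - 1"]
    by (auto simp: algebra_simps)
  moreover have "y \<in> {-2, -1, 0, 1}" if "\<not> (y \<ge> 2 \<or> y \<le> -3)"
    using that by auto
  ultimately show ?thesis
    by fastforce
qed

lemma sum_lessThan_add: "(\<Sum>i<a + b. f i) = (\<Sum>i<a. f i) + (\<Sum>i<b. f (a + i))"
  for f :: "nat \<Rightarrow> 'a::comm_monoid_add"
  by (induction b) (auto simp: add.assoc)

lemma represents_Nil_iff [simp]: "represents m [] N \<longleftrightarrow> N = 0"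
  by (simp add: represents_def)

lemma represents_append:
  assumes "represents m xs A" "represents m ys B"
  shows "represents m (xs @ ys) (A + B)"
proof -
  obtain x1 where x1: "A = (\<Sum>i<length xs. int (xs ! i) * pgon m (x1 i))"
    using assms(1) by (auto simp: represents_def)
  obtain x2 where x2: "B = (\<Sum>i<length ys. int (ys ! i) * pgon m (x2 i))"
    using assms(2) by (auto simp: represents_def)
  define x where "x i = (if i < length xs then x1 i else x2 (i - length xs))" for i
  have "A + B = (\<Sum>i<length (xs @ ys). int ((xs @ ys) ! i) * pgon m (x i))"
    unfolding x1 x2 x_def by (auto simp: sum_lessThan_add nth_append intro!: sum.cong)
  then show ?thesis
    unfolding represents_def by blast
qed

lemma represents_snoc_iff:
  "represents m (bs @ [a]) N \<longleftrightarrow> (\<exists>M c. represents m bs M \<and> N = M + int a * pgon m c)"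
proof
  assume "represents m (bs @ [a]) N"
  then obtain x where "N = (\<Sum>i<length bs. int (bs ! i) * pgon m (x i)) + int a * pgon m (x (length bs))"
    by (auto simp: represents_def nth_append)
  then show "\<exists>M c. represents m bs M \<and> N = M + int a * pgon m c"
    unfolding represents_def by blast
next
  assume "\<exists>M c. represents m bs M \<and> N = M + int a * pgon m c"
  then obtain M c where "represents m bs M" "N = M + int a * pgon m c"
    by blast
  moreover have "represents m [a] (int a * pgon m c)"
    unfolding represents_def by (rule exI[of _ "\<lambda>_. c"]) simp
  ultimately show "represents m (bs @ [a]) N"
    using represents_append by blast
qed

lemma represents_0: "represents m as 0"
  unfolding represents_def by (rule exI[of _ "\<lambda>_. 0"]) simp

lemma represents_nonneg:
  assumes "4 \<le> m" "represents m as N"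
  shows "0 \<le> N"
  using assms(2)
proof (induction as arbitrary: N rule: rev_induct)
  case (snoc a bs)
  then show ?case
    using pgon_nonneg[OF assms(1)] by (fastforce simp: represents_snoc_iff)
qed simp

lemma represents_replicate_one: "represents m (replicate n 1) (int n * pgon m c)"
  unfolding represents_def by (rule exI[of _ "\<lambda>_. c"]) simp

lemma represents_replicate_one_le:
  assumes "u \<le> n"
  shows "represents m (replicate n 1) (int u)"
proof -
  have "replicate n (1::nat) = replicate u 1 @ replicate (n - u) 1"
    using assms by (metis le_add_diff_inverse replicate_add)
  then show ?thesis
    using represents_append[OF represents_replicate_one[of m u 1] represents_replicate_one[of m "n - u" 0]]
    by simp
qed

text \<open>Among K ones, i take P_m(2) = m, s - i take P_m(-1) = m - 3 and u take P_m(1) = 1,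
  giving s(m-2) + (u + 3i - s).\<close>
lemma represents_replicate_one_multiple:
  assumes "s + 2 \<le> K" "- int s \<le> e" "e \<le> int K + int s"
  shows "represents m (replicate K 1) (int s * (int m - 2) + e)"
proof -
  obtain i u :: nat where iu: "i \<le> s" "u \<le> K - s" "int u = e + int s - 3 * int i"
  proof (cases "e + int s \<le> 3 * int s")
    case True
    have "(e + int s) mod 3 = e + int s - 3 * ((e + int s) div 3)"
      using div_mult_mod_eq[of "e + int s" 3] by linarith
    then show ?thesis
      by (intro that[of "nat ((e + int s) div 3)" "nat ((e + int s) mod 3)"]) (use True assms in auto)
  next
    case False
    then show ?thesis
      by (intro that[of s "nat (e - 2 * int s)"]) (use assms in auto)
  qed
  have "replicate K (1::nat) = replicate i 1 @ replicate (s - i) 1 @ replicate (K - s) 1"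
    using iu assms by (simp flip: replicate_add)
  moreover have "represents m (replicate i 1 @ replicate (s - i) 1 @ replicate (K - s) 1)
      (int i * pgon m 2 + (int (s - i) * pgon m (-1) + int u))"
    by (intro represents_append represents_replicate_one represents_replicate_one_le iu)
  moreover have "int i * pgon m 2 + (int (s - i) * pgon m (-1) + int u) = int s * (int m - 2) + e"
    using iu by (simp add: pgon_2 pgon_minus_1 algebra_simps)
  ultimately show ?thesis
    by metis
qed

text \<open>Every coefficient contributes either at most itself or at least m - 3.\<close>
lemma represents_le_sum_list:
  assumes m: "4 \<le> m" and pos: "\<forall>a\<in>set as. 0 < a"
    and rep: "represents m as N" and small: "N \<le> int m - 4"
  shows "N \<le> int (sum_list as)"
  using pos rep small
proof (induction as arbitrary: N rule: rev_induct)
  case (snoc a bs)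
  then obtain M c where M: "represents m bs M" "N = M + int a * pgon m c"
    by (auto simp: represents_snoc_iff)
  have "0 \<le> M"
    using represents_nonneg[OF m M(1)] .
  have "pgon m c \<le> 1"
  proof (rule ccontr)
    assume "\<not> pgon m c \<le> 1"
    then have "int m - 3 \<le> pgon m c"
      using pgon_cases[OF m, of c] by auto
    also have "\<dots> \<le> int a * pgon m c"
      using snoc.prems(1) pgon_nonneg[OF m, of c] by (simp add: mult_le_cancel_right1)
    finally show False
      using M(2) \<open>0 \<le> M\<close> snoc.prems(3) by linarith
  qed
  have "0 \<le> int a * pgon m c"
    using pgon_nonneg[OF m, of c] by simp
  then have "M \<le> int m - 4"
    using M(2) snoc.prems(3) by linarith
  then have "M \<le> int (sum_list bs)"
    using snoc.IH[OF _ M(1)] snoc.prems(1) by simp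
  moreover have "int a * pgon m c \<le> int a"
    using \<open>pgon m c \<le> 1\<close> mult_left_mono[of "pgon m c" 1 "int a"] by simp
  ultimately show ?case
    using M(2) by simp
qed simp

lemma truant_minimal:
  assumes "0 < N" "\<not> represents m as N"
  shows "0 < truant m as \<and> \<not> represents m as (truant m as) \<and> truant m as \<le> N"
proof -
  define P where "P = (\<lambda>N. 0 < N \<and> \<not> represents m as N)"
  obtain x where x: "P x" "\<forall>y. P y \<longrightarrow> nat x \<le> nat y"
    using ex_has_least_nat[of P N nat] assms unfolding P_def by blast
  have "truant m as = x"
    unfolding truant_def P_def[symmetric] by (rule Least_equality) (use x in \<open>auto simp: P_def\<close>)
  then show ?thesis
    using x assms by (auto simp: P_def)
qed

lemma coeff_le_of_represents_snoc:
  assumes m: "4 \<le> m" and "represents m (bs @ [a]) N" "\<not> represents m bs N"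
  shows "int a \<le> N"
proof -
  obtain M c where M: "represents m bs M" "N = M + int a * pgon m c"
    using assms(2) by (auto simp: represents_snoc_iff)
  have "pgon m c \<noteq> 0"
    using M assms(3) by auto
  then have "1 \<le> pgon m c"
    using pgon_cases[OF m, of c] m by auto
  then have "int a \<le> int a * pgon m c"
    by (simp add: mult_le_cancel_left1)
  then show ?thesis
    using M(2) represents_nonneg[OF m M(1)] by linarith
qed

definition slowly_growing :: "int \<Rightarrow> int \<Rightarrow> nat list \<Rightarrow> bool" where
  "slowly_growing R M ys \<longleftrightarrow>
     (\<forall>j<length ys. R + int (sum_list (take j ys)) + 1 \<le> M \<longrightarrow>
        int (ys ! j) \<le> R + int (sum_list (take j ys)) + 1)"

lemma slowly_growing_Nil [simp]: "slowly_growing R M []"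
  by (simp add: slowly_growing_def)

lemma slowly_growing_snoc_iff:
  "slowly_growing R M (ys @ [a]) \<longleftrightarrow>
     slowly_growing R M ys \<and>
     (R + int (sum_list ys) + 1 \<le> M \<longrightarrow> int a \<le> R + int (sum_list ys) + 1)"
  by (auto simp: slowly_growing_def nth_append less_Suc_eq)

lemma slowly_growing_appendD:
  assumes "slowly_growing R M (xs @ ys)"
  shows "slowly_growing (R + int (sum_list xs)) M ys"
  unfolding slowly_growing_def
proof (intro allI impI)
  fix j assume "j < length ys" and "R + int (sum_list xs) + int (sum_list (take j ys)) + 1 \<le> M"
  then show "int (ys ! j) \<le> R + int (sum_list xs) + int (sum_list (take j ys)) + 1"
    using assms[unfolded slowly_growing_def, rule_format, of "length xs + j"]
    by (simp add: nth_append)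
qed

text \<open>Greedy choice of x_i \<in> {0, 1}: the subset sums of a slowly growing list leave no gaps longer
  than R.\<close>
lemma represents_near:
  assumes R: "0 \<le> R" and grow: "slowly_growing R M ys"
    and v: "0 \<le> v" "v \<le> M" "v \<le> R + int (sum_list ys)"
  shows "\<exists>\<sigma>. represents m ys \<sigma> \<and> \<sigma> \<le> v \<and> v \<le> \<sigma> + R"
  using grow v
proof (induction ys arbitrary: v rule: rev_induct)
  case Nil
  then show ?case
    by auto
next
  case (snoc a ys)
  have grow_ys: "slowly_growing R M ys"
    using snoc.prems(1) by (simp add: slowly_growing_snoc_iff)
  show ?case
  proof (cases "v \<le> R + int (sum_list ys)")
    case True
    then obtain \<sigma> where "represents m ys \<sigma>" "\<sigma> \<le> v" "v \<le> \<sigma> + R"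
      using snoc.IH[OF grow_ys] snoc.prems by blast
    moreover from this(1) have "represents m (ys @ [a]) (\<sigma> + int a * pgon m 0)"
      unfolding represents_snoc_iff by blast
    ultimately show ?thesis
      by auto
  next
    case False
    then have "int a \<le> R + int (sum_list ys) + 1"
      using snoc.prems by (simp add: slowly_growing_snoc_iff)
    then obtain \<sigma> where "represents m ys \<sigma>" "\<sigma> \<le> v - int a" "v - int a \<le> \<sigma> + R"
      using snoc.IH[OF grow_ys, of "v - int a"] snoc.prems False by auto
    moreover from this(1) have "represents m (ys @ [a]) (\<sigma> + int a * pgon m 1)"
      unfolding represents_snoc_iff by blast
    ultimately show ?thesis
      by (intro exI[of _ "\<sigma> + int a"]) auto
  qed
qed

lemma sorted_le_last: "sorted xs \<Longrightarrow> x \<in> set xs \<Longrightarrow> x \<le> last xs"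
  by (induction xs) auto

lemma escalator_node_mgonal_form: "escalator_node m as \<Longrightarrow> mgonal_form as"
proof (induction rule: escalator_node.induct)
  case (child bs a)
  then show ?case
    by (auto simp: mgonal_form_def sorted_append dest: sorted_le_last)
qed (simp add: mgonal_form_def)

lemma escalator_node_slowly_growing:
  assumes "escalator_node m as" and m: "4 \<le> m"
  shows "slowly_growing 0 (int m - 4) as"
  using assms(1)
proof (induction rule: escalator_node.induct)
  case (child bs a)
  have "int a \<le> int (sum_list bs) + 1" if small: "int (sum_list bs) + 1 \<le> int m - 4"
  proof -
    have "\<forall>b\<in>set bs. 0 < b"
      using escalator_node_mgonal_form[OF child.hyps(1)] by (simp add: mgonal_form_def)
    then have "\<not> represents m bs (int (sum_list bs) + 1)"
      using represents_le_sum_list[OF m _ _ small] by fastforce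
    then have "\<not> represents m bs (truant m bs)" "truant m bs \<le> int (sum_list bs) + 1"
      using truant_minimal[of "int (sum_list bs) + 1" m bs] by auto
    moreover have "int a \<le> truant m bs"
      using coeff_le_of_represents_snoc[OF m child.hyps(5)] calculation(1) .
    ultimately show ?thesis
      by linarith
  qed
  then show ?case
    using child.IH by (simp add: slowly_growing_snoc_iff)
qed simp

lemma represents_multiple_plus_residue:
  assumes m: "4 \<le> m" and K: "s + 2 \<le> K" "3 \<le> K"
    and grow: "slowly_growing (int K) (int m - 4) ys"
    and total: "int m - 4 \<le> int K + int (sum_list ys)"
    and r: "0 \<le> r" "r \<le> int m - 3"
  shows "represents m (replicate K 1 @ ys) (int s * (int m - 2) + r)"
proof -
  have ones_and_rest: "represents m (replicate K 1 @ ys) (int t * (int m - 2) + e + \<sigma>)"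
    if "t + 2 \<le> K" "- int t \<le> e" "e \<le> int K + int t" "represents m ys \<sigma>" for t e \<sigma>
    using represents_append[OF represents_replicate_one_multiple[OF that(1-3)] that(4)] by simp
  show ?thesis
  proof (cases "s = 0 \<and> r = int m - 3")
    case True
    then show ?thesis
      using ones_and_rest[of 1 "-1" 0] K represents_0 by simp
  next
    case False
    obtain \<sigma> where \<sigma>: "represents m ys \<sigma>" "\<sigma> \<le> min r (int m - 4)" "min r (int m - 4) \<le> \<sigma> + int K"
      using represents_near[where m = m, OF _ grow, of "min r (int m - 4)"] r total m by (auto simp: min_le_iff_disj)
    moreover have "r - \<sigma> \<le> int K + int s"
      using \<sigma>(3) False r by (cases "r \<le> int m - 4") auto
    ultimately show ?thesis
      using ones_and_rest[of s "r - \<sigma>" \<sigma>] K by simp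
  qed
qed

lemma represents_below:
  assumes m: "4 \<le> m" and K: "3 \<le> K"
    and grow: "slowly_growing (int K) (int m - 4) ys"
    and total: "int m - 4 \<le> int K + int (sum_list ys)"
    and N: "0 \<le> N" "N < (int K - 1) * (int m - 2)"
  shows "represents m (replicate K 1 @ ys) N"
proof -
  define d where "d = int m - 2"
  have d: "0 < d"
    using m by (simp add: d_def)
  define s where "s = N div d"
  define r where "r = N mod d"
  have N_eq: "N = s * d + r"
    by (simp add: s_def r_def)
  have r: "0 \<le> r" "r \<le> int m - 3"
    using pos_mod_bound[OF d, of N] pos_mod_sign[OF d, of N] by (auto simp: r_def d_def)
  have "0 \<le> s"
    using N(1) d by (simp add: s_def pos_imp_zdiv_nonneg_iff)
  moreover have "s * d < (int K - 1) * d"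
    using N(2) N_eq r(1) by (simp add: d_def)
  then have "s < int K - 1"
    using d by (simp add: mult_less_cancel_right)
  ultimately have "nat s + 2 \<le> K"
    by linarith
  then show ?thesis
    using represents_multiple_plus_residue[OF m _ K grow total r, of "nat s"] N_eq \<open>0 \<le> s\<close>
    by (simp add: d_def)
qed

lemma escalator_const_ge_2:
  assumes "escalator_const C"
  shows "2 \<le> C"
proof (rule ccontr)
  assume "\<not> 2 \<le> C"
  have "represents 3 (replicate C 1) N" if "1 \<le> N" "N \<le> int C * (int 3 - 2)" for N
    using represents_replicate_one_le[of "nat N" C 3] that by simp
  then have "universal 3 (replicate C 1)"
    using assms by (simp add: escalator_const_def mgonal_form_def)
  then have "represents 3 (replicate C 1) 2"
    by (simp add: universal_def)
  show False
  proof (cases "C = 0")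
    case True
    then show False
      using \<open>represents 3 (replicate C 1) 2\<close> by simp
  next
    case False
    then have "C = 1"
      using \<open>\<not> 2 \<le> C\<close> by simp
    then have "represents 3 ([] @ [1]) 2"
      using \<open>represents 3 (replicate C 1) 2\<close> by simp
    then obtain c where "pgon 3 c = 2"
      unfolding represents_snoc_iff by auto
    then show False
      using pgon_3_ne_2 by blast
  qed
qed

lemma universal_of_ones_prefix:
  assumes hC: "escalator_const C" and C: "2 \<le> C" and m: "4 \<le> m"
    and form: "mgonal_form (replicate (C + 2) 1 @ ys)"
    and grow: "slowly_growing (int (C + 2)) (int m - 4) ys"
    and total: "int m - 4 \<le> int (C + 2) + int (sum_list ys)"
  shows "universal m (replicate (C + 2) 1 @ ys)"
proof -
  have "represents m (replicate (C + 2) 1 @ ys) N" if "1 \<le> N" "N \<le> int C * (int m - 2)" for N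
    using represents_below[OF m _ grow total] that m C by (simp add: algebra_simps)
  then show ?thesis
    using hC m form by (simp add: escalator_const_def)
qed

lemma ones_prefix_length:
  assumes C: "2 \<le> C" and m: "6 * int C ^ 2 * (int C + 1) < int m"
  shows "6 * (C + 1) \<le> m" and "int (C + 2) \<le> (int C - 2) * int ((m - 2) div (C + 1)) + 5"
proof -
  have "6 * 1 * (int C + 1) \<le> 6 * int C ^ 2 * (int C + 1)"
    using C by (intro mult_right_mono mult_left_mono) auto
  then have "int (6 * (C + 1)) \<le> int m"
    using m by simp
  then show m_ge: "6 * (C + 1) \<le> m"
    by (simp only: of_nat_le_iff)
  show "int (C + 2) \<le> (int C - 2) * int ((m - 2) div (C + 1)) + 5"
  proof (cases "C = 2")
    case False
    have "2 \<le> (m - 2) div (C + 1)"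
      using m_ge by (simp add: less_eq_div_iff_mult_less_eq)
    then have "(int C - 2) * 2 \<le> (int C - 2) * int ((m - 2) div (C + 1))"
      using C by (intro mult_left_mono) auto
    then show ?thesis
      using C by (simp add: algebra_simps)
  qed simp
qed

theorem lemma4p15:
  fixes C m :: nat and as :: "nat list"
  assumes hC: "escalator_const C"
    and hm: "int m > 6 * int C ^ 2 * (int C + 1)"
    and hnode: "escalator_node m as"
    and hn: "int (length as) \<ge> (int C - 2) * int ((m - 2) div (C + 1)) + 5"
    and hones: "\<forall>i. int i < (int C - 2) * int ((m - 2) div (C + 1)) + 5 \<longrightarrow> as ! i = 1"
    and hsum: "int (sum_list as) \<ge> int m - 4"
  shows "universal m as"
proof -
  have C: "2 \<le> C"
    using escalator_const_ge_2[OF hC] .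
  note m = ones_prefix_length[OF C hm]
  have "take (C + 2) as = replicate (C + 2) 1"
    using hn hones m(2) by (intro nth_equalityI) (auto simp del: replicate.simps)
  then obtain ys where as: "as = replicate (C + 2) 1 @ ys"
    by (metis append_take_drop_id)
  have "slowly_growing 0 (int m - 4) (replicate (C + 2) 1 @ ys)"
    using escalator_node_slowly_growing[OF hnode] m(1) as by simp
  then have "slowly_growing (int (C + 2)) (int m - 4) ys"
    using slowly_growing_appendD by (fastforce simp: sum_list_replicate)
  then show ?thesis
    using universal_of_ones_prefix[OF hC C] escalator_node_mgonal_form[OF hnode] m(1) hsum as
    by (simp add: sum_list_replicate)
qed

end
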